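(* For every integer $N\ge 0$, let $T(N)$ be the number of tilings of a $2\times 3\times n$ box, $n=2N/3$, by $N$ bricks of size $1\times 2\times 2$ (and $0$ if $3\nmid N$). Then, as formal power series, \[ \sum_{N\ge 0} T(N)\,z^N=\frac{1-2z^3}{(1-z^3)(1-6z^3)}. \]
   Context: A tiling of a $k\times m\times n$ box (made of $kmn$ unit cubes) by $a\times b\times c$ bricks is a partition of the box into non-overlapping axis-parallel boxes with integer corner coordinates, each congruent (by an axis-permuting placement) to the $a\times b\times c$ brick; all orientations are allowed. Tilings related by symmetries of the box are counted as distinct. The empty tiling counts once for $N=0$. *)

theory Defs
  imports Main "HOL-Computational_Algebra.Formal_Power_Series"
begin

type_synonym cell = "nat \<times> nat \<times> nat"

text \<open>The axis-parallel box of unit cubes with lower corner p and side lengths d.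
  A unit cube is identified with its lower corner (i,j,l).\<close>
definition cbox3 :: "nat \<times> nat \<times> nat \<Rightarrow> nat \<times> nat \<times> nat \<Rightarrow> cell set" where
  "cbox3 p d = (case p of (x,y,z) \<Rightarrow> case d of (a,b,c) \<Rightarrow>
       {x..<x+a} \<times> {y..<y+b} \<times> {z..<z+c})"

definition orientations :: "nat \<times> nat \<times> nat \<Rightarrow> (nat \<times> nat \<times> nat) set" where
  "orientations d = (case d of (a,b,c) \<Rightarrow>
     {(a,b,c),(a,c,b),(b,a,c),(b,c,a),(c,a,b),(c,b,a)})"

definition is_brick :: "nat \<times> nat \<times> nat \<Rightarrow> cell set \<Rightarrow> bool" where
  "is_brick d B \<longleftrightarrow> (\<exists>p e. e \<in> orientations d \<and> B = cbox3 p e)"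

definition is_tiling :: "nat \<Rightarrow> nat \<Rightarrow> nat \<Rightarrow> nat \<times> nat \<times> nat \<Rightarrow> cell set set \<Rightarrow> bool" where
  "is_tiling k m n d P \<longleftrightarrow> finite P \<and> (\<forall>B\<in>P. is_brick d B) \<and>
     pairwise disjnt P \<and> \<Union>P = cbox3 (0,0,0) (k,m,n)"

definition T :: "nat \<Rightarrow> nat" where
  "T N = (if 3 dvd N
          then card {P. is_tiling 2 3 (2 * N div 3) (1,2,2) P \<and> card P = N}
          else 0)"

end

theory Submission
  imports Defs
begin

text \<open>Transfer matrix in the long direction. Always remove the brick covering a cell of the
  highest, partially filled layer: what remains is a box of full layers with at most two
  partial layers on top. A few such steps reduce every profile reached from a full box to one of
  five (no cap, or a 2 x 2 square or a 2 x 1 row on top at either end), whose tiling counts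
  satisfy a linear recurrence. Solving it, a box of length 2k has (4 * 6^k + 1)/5 tilings and a
  box of odd length none; as a box of length 2k takes 3k bricks, the generating function is
  (1/5) (4/(1 - 6 z^3) + 1/(1 - z^3)) = (1 - 2 z^3)/((1 - z^3)(1 - 6 z^3)).\<close>

definition brick_tilings :: "nat \<times> nat \<times> nat \<Rightarrow> cell set \<Rightarrow> cell set set set" where
  "brick_tilings d R = {P. finite P \<and> (\<forall>X\<in>P. is_brick d X) \<and> pairwise disjnt P \<and> \<Union>P = R}"

definition num_tilings :: "nat \<times> nat \<times> nat \<Rightarrow> cell set \<Rightarrow> nat" where
  "num_tilings d R = card (brick_tilings d R)"

lemma is_tiling_iff_brick_tilings:
  "is_tiling k m n d P \<longleftrightarrow> P \<in> brick_tilings d (cbox3 (0,0,0) (k,m,n))"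
  by (simp add: is_tiling_def brick_tilings_def)

lemma finite_cbox3: "finite (cbox3 p e)"
  by (cases p; cases e) (simp add: cbox3_def)

lemma card_cbox3: "card (cbox3 p (a,b,c)) = a * b * c"
  by (cases p) (simp add: cbox3_def card_cartesian_product)

lemma card_brick: "is_brick (a,b,c) X \<Longrightarrow> card X = a * b * c"
  by (auto simp: is_brick_def orientations_def card_cbox3)

lemma finite_brick: "is_brick d X \<Longrightarrow> finite X"
  by (auto simp: is_brick_def finite_cbox3)

lemma finite_brick_tilings: "finite R \<Longrightarrow> finite (brick_tilings d R)"
proof -
  assume "finite R"
  moreover have "brick_tilings d R \<subseteq> Pow (Pow R)" unfolding brick_tilings_def by auto
  ultimately show ?thesis by (meson finite_Pow_iff finite_subset)
qed

lemma card_tiled_region: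
  assumes "P \<in> brick_tilings (a,b,c) R"
  shows "card R = a * b * c * card P"
proof -
  from assms have P: "finite P" "\<forall>X\<in>P. is_brick (a,b,c) X" "pairwise disjnt P" "\<Union>P = R"
    by (auto simp: brick_tilings_def)
  have "card (\<Union>P) = (\<Sum>X\<in>P. card X)"
    using card_Union_disjoint P finite_brick by blast
  also have "\<dots> = (\<Sum>X\<in>P. a * b * c)" using P(2) by (intro sum.cong) (auto simp: card_brick)
  finally show ?thesis using P(4) by simp
qed

lemma num_tilings_eq_0_if_not_dvd_card:
  assumes "\<not> a * b * c dvd card R"
  shows "num_tilings (a,b,c) R = 0"
proof -
  have "P \<notin> brick_tilings (a,b,c) R" for P
    using card_tiled_region[of P a b c R] assms by auto
  hence "brick_tilings (a,b,c) R = {}" by blast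
  thus ?thesis by (simp add: num_tilings_def)
qed

lemma num_tilings_empty:
  assumes "0 < a * b * c"
  shows "num_tilings (a,b,c) {} = 1"
proof -
  have "X \<noteq> {}" if "is_brick (a,b,c) X" for X
    using card_brick[OF that] assms by auto
  hence "brick_tilings (a,b,c) {} = {{}}" by (auto simp: brick_tilings_def)
  thus ?thesis by (simp add: num_tilings_def)
qed

lemma num_tilings_brick:
  assumes X: "is_brick (a,b,c) X" and pos: "0 < a * b * c"
  shows "num_tilings (a,b,c) X = 1"
proof -
  have "P = {X}" if P: "P \<in> brick_tilings (a,b,c) X" for P
  proof -
    from P have b: "\<forall>Y\<in>P. is_brick (a,b,c) Y" and d: "pairwise disjnt P" and u: "\<Union>P = X"
      by (auto simp: brick_tilings_def)
    have ne: "Y \<noteq> {}" if "is_brick (a,b,c) Y" for Y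
      using card_brick[OF that] pos by auto
    obtain Y where Y: "Y \<in> P" using u ne[OF X] by auto
    have "Y = X"
      using Y u b card_brick X by (intro card_subset_eq finite_brick[OF X]) auto
    moreover have "Z = X" if Z: "Z \<in> P" for Z
    proof (rule ccontr)
      assume "Z \<noteq> X"
      hence "disjnt Z X" using d Z Y \<open>Y = X\<close> by (auto simp: pairwise_def)
      moreover have "Z \<subseteq> X" using Z u by blast
      ultimately have "Z = {}" by (auto simp: disjnt_def)
      thus False using ne b Z by blast
    qed
    ultimately show ?thesis using Y by blast
  qed
  moreover have "{X} \<in> brick_tilings (a,b,c) X" using X by (auto simp: brick_tilings_def)
  ultimately have "brick_tilings (a,b,c) X = {{X}}" by blast
  thus ?thesis by (simp add: num_tilings_def)
qed

lemma brick_tilings_split_at_cell: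
  assumes "c \<in> R"
  shows "brick_tilings d R =
    (\<Union>X\<in>{X. is_brick d X \<and> c \<in> X \<and> X \<subseteq> R}. insert X ` brick_tilings d (R - X))"
    (is "_ = ?rhs")
proof
  show "brick_tilings d R \<subseteq> ?rhs"
  proof
    fix P assume "P \<in> brick_tilings d R"
    hence P: "finite P" "\<forall>Y\<in>P. is_brick d Y" "pairwise disjnt P" "\<Union>P = R"
      by (auto simp: brick_tilings_def)
    obtain X where X: "X \<in> P" "c \<in> X" using assms P(4) by auto
    have "\<Union>(P - {X}) = R - X"
      using X P(3,4) unfolding pairwise_def disjnt_def by blast
    moreover have "pairwise disjnt (P - {X})" using P(3) by (meson Diff_subset pairwise_subset)
    ultimately have "P - {X} \<in> brick_tilings d (R - X)" using P(1,2) by (simp add: brick_tilings_def)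
    moreover have "P = insert X (P - {X})" using X by auto
    ultimately show "P \<in> ?rhs" using X P(2,4) by blast
  qed
next
  show "?rhs \<subseteq> brick_tilings d R"
  proof
    fix P assume "P \<in> ?rhs"
    then obtain X Q where X: "is_brick d X" "X \<subseteq> R" and Q: "Q \<in> brick_tilings d (R - X)"
      and P: "P = insert X Q" by blast
    from Q have "finite Q" "\<forall>Y\<in>Q. is_brick d Y" "pairwise disjnt Q" "\<Union>Q = R - X"
      by (auto simp: brick_tilings_def)
    moreover from this(3,4) have "pairwise disjnt (insert X Q)"
      by (auto simp: pairwise_insert disjnt_def)
    ultimately show "P \<in> brick_tilings d R" using X unfolding P brick_tilings_def by auto
  qed
qed

lemma num_tilings_split_at_cell:
  assumes c: "c \<in> R" and R: "finite R"
  shows "num_tilings d R = (\<Sum>X\<in>{X. is_brick d X \<and> c \<in> X \<and> X \<subseteq> R}. num_tilings d (R - X))"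
proof -
  let ?S = "{X. is_brick d X \<and> c \<in> X \<and> X \<subseteq> R}"
  have "?S \<subseteq> Pow R" by blast
  hence fin: "finite ?S" using R by (simp add: finite_subset)
  have disj: "insert X ` brick_tilings d (R - X) \<inter> insert Y ` brick_tilings d (R - Y) = {}"
    if X: "X \<in> ?S" and Y: "Y \<in> ?S" and "X \<noteq> Y" for X Y
  proof -
    have "X \<notin> Q" if "Q \<in> brick_tilings d (R - Y)" for Q
    proof
      assume "X \<in> Q"
      hence "X \<subseteq> R - Y" using that by (auto simp: brick_tilings_def)
      thus False using X Y by blast
    qed
    thus ?thesis using \<open>X \<noteq> Y\<close> by blast
  qed
  have inj: "inj_on (insert X) (brick_tilings d (R - X))" if "c \<in> X" for X
  proof (rule inj_onI)
    fix P Q assume "P \<in> brick_tilings d (R - X)" "Q \<in> brick_tilings d (R - X)" "insert X P = insert X Q"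
    moreover from this(1,2) have "X \<notin> P" "X \<notin> Q" using that by (auto simp: brick_tilings_def)
    ultimately show "P = Q" by (metis insert_ident)
  qed
  have "num_tilings d R = card (\<Union>X\<in>?S. insert X ` brick_tilings d (R - X))"
    unfolding num_tilings_def brick_tilings_split_at_cell[OF c] ..
  also have "\<dots> = (\<Sum>X\<in>?S. card (insert X ` brick_tilings d (R - X)))"
    using fin R finite_brick_tilings disj by (intro card_UN_disjoint) auto
  also have "\<dots> = (\<Sum>X\<in>?S. num_tilings d (R - X))"
    using inj by (intro sum.cong) (auto simp: card_image num_tilings_def)
  finally show ?thesis .
qed

lemma is_brick_1_2_2:
  "is_brick (1,2,2) X \<longleftrightarrow> (\<exists>p e. e \<in> {(1,2,2),(2,1,2),(2,2,1)} \<and> X = cbox3 p e)"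
  by (simp add: is_brick_def orientations_def insert_commute)

definition cross_section :: "(nat \<times> nat) set" where
  "cross_section = {..<2} \<times> {..<3}"

lemma cross_section_eq: "cross_section = {(0,0),(0,1),(0,2),(1,0),(1,1),(1,2)}"
  by (auto simp: cross_section_def eval_nat_numeral lessThan_Suc)

definition profile_region :: "nat \<Rightarrow> (nat \<times> nat) set \<Rightarrow> (nat \<times> nat) set \<Rightarrow> cell set" where
  "profile_region m A B = {(x,y,z). (z < m \<and> (x,y) \<in> cross_section) \<or>
     (z = m \<and> (x,y) \<in> A) \<or> (z = Suc m \<and> (x,y) \<in> B)}"

text \<open>Orientation code k: 0 for a brick lying flat, 1 and 2 for upright bricks extended in
  the y- resp. x-direction; (px,py) is the corner of the footprint with least coordinates.\<close>
definition footprint :: "nat \<Rightarrow> nat \<Rightarrow> nat \<Rightarrow> (nat \<times> nat) set" where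
  "footprint k px py = (if k = 0 then {(px,py),(Suc px,py),(px,Suc py),(Suc px,Suc py)}
     else if k = 1 then {(px,py),(px,Suc py)} else {(px,py),(Suc px,py)})"

definition profile_brick :: "nat \<Rightarrow> nat \<Rightarrow> nat \<Rightarrow> nat \<Rightarrow> cell set" where
  "profile_brick m k px py =
     {(x,y,z). (x,y) \<in> footprint k px py \<and> (z = Suc m \<or> (k \<noteq> 0 \<and> z = m))}"

lemma finite_profile_region:
  assumes "A \<subseteq> cross_section" "B \<subseteq> cross_section"
  shows "finite (profile_region m A B)"
proof -
  have "profile_region m A B \<subseteq> {..<2} \<times> {..<3} \<times> {..Suc m}"
    using assms by (auto simp: profile_region_def cross_section_def)
  thus ?thesis by (rule finite_subset) simp
qed

lemma profile_region_diff_brick: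
  "profile_region m A B - profile_brick m k px py =
     profile_region m (if k = 0 then A else A - footprint k px py) (B - footprint k px py)"
  by (auto simp: profile_region_def profile_brick_def)

lemma profile_region_Suc_top_empty:
  "profile_region (Suc m) A {} = profile_region m cross_section A"
  by (auto simp: profile_region_def cross_section_def less_Suc_eq)

lemma profile_region_0_0: "profile_region n {} {} = cbox3 (0,0,0) (2,3,n)"
  by (auto simp: profile_region_def cross_section_def cbox3_def)

lemma is_brick_profile_brick:
  assumes "k < 3"
  shows "is_brick (1,2,2) (profile_brick m k px py)"
proof -
  have "profile_brick m 0 px py = cbox3 (px,py,Suc m) (2,2,1)"
    "profile_brick m 1 px py = cbox3 (px,py,m) (1,2,2)"
    "profile_brick m 2 px py = cbox3 (px,py,m) (2,1,2)"
    by (auto simp: profile_brick_def footprint_def cbox3_def)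
  moreover have "k = 0 \<or> k = 1 \<or> k = 2" using assms by auto
  ultimately show ?thesis unfolding is_brick_1_2_2 by blast
qed

lemma footprint_inj:
  assumes "k < 3" "k' < 3" and eq: "footprint k px py = footprint k' px' py'"
  shows "k = k' \<and> px = px' \<and> py = py'"
proof -
  have ge: "px \<le> x \<and> py \<le> y" if "(x,y) \<in> footprint k px py" for k px py x y
    using that by (auto simp: footprint_def split: if_splits)
  have "(px,py) \<in> footprint k px py" "(px',py') \<in> footprint k' px' py'"
    by (simp_all add: footprint_def)
  hence p: "px = px'" "py = py'" using eq ge by (metis le_antisym)+
  have "k = k'" using assms eq unfolding p footprint_def
    by (auto simp: less_Suc_eq numeral_3_eq_3 doubleton_eq_iff insert_eq_iff split: if_splits)
  thus ?thesis using p by simp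
qed

lemma profile_brick_inj:
  assumes "k < 3" "k' < 3" and "profile_brick m k px py = profile_brick m k' px' py'"
  shows "k = k' \<and> px = px' \<and> py = py'"
proof -
  have "footprint k px py = {(x,y). (x,y,Suc m) \<in> profile_brick m k px py}" for k px py
    by (auto simp: profile_brick_def)
  thus ?thesis using assms footprint_inj by metis
qed

lemma brick_through_top_layer:
  assumes "is_brick (1,2,2) X" and "(cx,cy,Suc m) \<in> X" and "X \<subseteq> profile_region m A B"
  obtains k px py where "k < 3" and "X = profile_brick m k px py"
proof -
  obtain px py pz a b h where e: "(a,b,h) \<in> {(1,2,2),(2,1,2),(2,2,1)}"
    and X: "X = cbox3 (px,py,pz) (a,b,h)"
    using assms(1) unfolding is_brick_1_2_2 by (metis prod_cases3)
  \<comment> \<open>the brick meets layer m + 1 but cannot stick out above it\<close>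
  have "(px,py,pz+h-1) \<in> X" using e X by (auto simp: cbox3_def)
  hence "pz + h - 1 \<le> Suc m" using assms(3) by (auto simp: profile_region_def)
  moreover have "pz \<le> Suc m" "Suc m < pz + h" using assms(2) X by (auto simp: cbox3_def)
  ultimately have top: "pz + h = Suc (Suc m)" by linarith
  define k where "k = (if h = 1 then 0 else if a = 1 then 1 else (2::nat))"
  have "X = profile_brick m k px py"
    using e top unfolding X k_def
    by (elim insertE) (auto simp: cbox3_def profile_brick_def footprint_def)
  moreover have "k < 3" by (simp add: k_def)
  ultimately show ?thesis using that by blast
qed

lemma bricks_covering_top_cell:
  assumes B: "B \<subseteq> cross_section"
  shows "{X. is_brick (1,2,2) X \<and> (cx,cy,Suc m) \<in> X \<and> X \<subseteq> profile_region m A B} =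
    (\<lambda>(k,px,py). profile_brick m k px py) ` {(k,px,py). k < 3 \<and> px < 2 \<and> py < 3 \<and>
       (cx,cy) \<in> footprint k px py \<and> footprint k px py \<subseteq> B \<and> (k \<noteq> 0 \<longrightarrow> footprint k px py \<subseteq> A)}"
  (is "?L = ?R")
proof
  show "?L \<subseteq> ?R"
  proof
    fix X assume "X \<in> ?L"
    hence br: "is_brick (1,2,2) X" and cX: "(cx,cy,Suc m) \<in> X" and XH: "X \<subseteq> profile_region m A B"
      by simp_all
    obtain k px py where k: "k < 3" and Xk: "X = profile_brick m k px py"
      using brick_through_top_layer[OF br cX XH] .
    have "(x,y) \<in> B" if "(x,y) \<in> footprint k px py" for x y
    proof -
      have "(x,y,Suc m) \<in> X" using that Xk by (simp add: profile_brick_def)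
      thus ?thesis using XH by (auto simp: profile_region_def)
    qed
    hence rB: "footprint k px py \<subseteq> B" by auto
    have "(x,y) \<in> A" if "k \<noteq> 0" "(x,y) \<in> footprint k px py" for x y
    proof -
      have "(x,y,m) \<in> X" using that Xk by (simp add: profile_brick_def)
      thus ?thesis using XH by (auto simp: profile_region_def)
    qed
    hence rA: "k \<noteq> 0 \<longrightarrow> footprint k px py \<subseteq> A" by auto
    have "(px,py) \<in> footprint k px py" by (simp add: footprint_def)
    hence "px < 2" "py < 3" using rB B by (auto simp: cross_section_def)
    moreover have "(cx,cy) \<in> footprint k px py" using cX Xk by (simp add: profile_brick_def)
    ultimately show "X \<in> ?R" unfolding Xk using k rB rA by blast
  qed
next
  show "?R \<subseteq> ?L"
  proof
    fix X assume "X \<in> ?R"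
    then obtain k px py where k: "k < 3" and c: "(cx,cy) \<in> footprint k px py"
      and rB: "footprint k px py \<subseteq> B" and rA: "k \<noteq> 0 \<longrightarrow> footprint k px py \<subseteq> A"
      and X: "X = profile_brick m k px py" by blast
    have "X \<subseteq> profile_region m A B"
      using rA rB unfolding X profile_brick_def profile_region_def by auto
    moreover have "(cx,cy,Suc m) \<in> X" using c X by (simp add: profile_brick_def)
    ultimately show "X \<in> ?L" using is_brick_profile_brick[OF k] X by blast
  qed
qed

text \<open>Stated as an explicit finite sum so that simp evaluates it for concrete A, B and (cx,cy).\<close>
lemma num_tilings_profile_region:
  assumes A: "A \<subseteq> cross_section" and B: "B \<subseteq> cross_section" and c: "(cx,cy) \<in> B"
  shows "num_tilings (1,2,2) (profile_region m A B) = (\<Sum>k<3. \<Sum>px<2. \<Sum>py<3.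
     if (cx,cy) \<in> footprint k px py \<and> footprint k px py \<subseteq> B \<and> (k \<noteq> 0 \<longrightarrow> footprint k px py \<subseteq> A)
     then num_tilings (1,2,2)
       (profile_region m (if k = 0 then A else A - footprint k px py) (B - footprint k px py))
     else 0)"
proof -
  let ?P = "\<lambda>(k,px,py). (cx,cy) \<in> footprint k px py \<and> footprint k px py \<subseteq> B \<and>
    (k \<noteq> 0 \<longrightarrow> footprint k px py \<subseteq> A)"
  let ?U = "{..<3::nat} \<times> {..<2::nat} \<times> {..<3::nat}"
  let ?V = "{(k,px,py). k < 3 \<and> px < 2 \<and> py < 3 \<and> (cx,cy) \<in> footprint k px py \<and>
    footprint k px py \<subseteq> B \<and> (k \<noteq> 0 \<longrightarrow> footprint k px py \<subseteq> A)}"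
  let ?f = "\<lambda>(k,px,py). profile_brick m k px py"
  let ?g = "\<lambda>(k,px,py). num_tilings (1,2,2)
    (profile_region m (if k = 0 then A else A - footprint k px py) (B - footprint k px py))"
  have cH: "(cx,cy,Suc m) \<in> profile_region m A B" using c by (simp add: profile_region_def)
  have inj: "inj_on ?f ?V"
    by (rule inj_onI) (use profile_brick_inj in force)
  have "num_tilings (1,2,2) (profile_region m A B) =
      (\<Sum>X\<in>?f ` ?V. num_tilings (1,2,2) (profile_region m A B - X))"
    using num_tilings_split_at_cell[OF cH finite_profile_region[OF A B]]
      bricks_covering_top_cell[OF B] by simp
  also have "\<dots> = (\<Sum>v\<in>?V. ?g v)"
    using inj by (simp add: sum.reindex case_prod_unfold profile_region_diff_brick)
  also have "?V = {v\<in>?U. ?P v}" by auto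
  also have "(\<Sum>v\<in>{v\<in>?U. ?P v}. ?g v) = (\<Sum>v\<in>?U. if ?P v then ?g v else 0)"
    by (rule sum.inter_filter) simp
  also have "\<dots> = (\<Sum>k<3. \<Sum>px<2. \<Sum>py<3. if ?P (k,px,py) then ?g (k,px,py) else 0)"
    unfolding sum.cartesian_product by (rule sum.cong) (auto split: if_splits)
  finally show ?thesis by (simp only: prod.case)
qed

definition profile_count :: "nat \<Rightarrow> (nat \<times> nat) set \<Rightarrow> (nat \<times> nat) set \<Rightarrow> nat" where
  "profile_count m A B = num_tilings (1,2,2) (profile_region m A B)"

definition box_count :: "nat \<Rightarrow> nat" where
  "box_count n = num_tilings (1,2,2) (cbox3 (0,0,0) (2,3,n))"

text \<open>Partial top layers, named by the y-coordinates (along the side of length 3) they cover.\<close>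
definition "square01 = {(0::nat,0::nat),(0,1),(1,0),(1,1)}"
definition "square12 = {(0::nat,1::nat),(0,2),(1,1),(1,2)}"
definition "row0 = {(0::nat,0::nat),(1,0)}"
definition "row2 = {(0::nat,2::nat),(1,2)}"

lemma box_count_eq_profile_count: "box_count n = profile_count n {} {}"
  by (simp add: box_count_def profile_count_def profile_region_0_0)

lemma profile_count_Suc_top_empty: "profile_count (Suc m) A {} = profile_count m cross_section A"
  by (simp add: profile_count_def profile_region_Suc_top_empty)

lemmas profile_expansion_simps = profile_count_def cross_section_eq footprint_def
  eval_nat_numeral insert_Diff_if square01_def square12_def row0_def row2_def

lemma box_count_Suc_Suc:
  "box_count (Suc (Suc m)) = profile_count (Suc m) row0 {} + 3 * box_count m + profile_count m square01 {}"
proof -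
  have "profile_count m cross_section cross_section = profile_count m cross_section row0
      + profile_count m {(0,0),(0,1),(0,2),(1,0)} {(0,0),(0,1),(0,2),(1,0)}
      + profile_count m square01 square01"
    by (subst profile_count_def, subst num_tilings_profile_region[where cx=1 and cy=2])
      (simp_all add: profile_expansion_simps)
  moreover have "profile_count m {(0,0),(0,1),(0,2),(1,0)} {(0,0),(0,1),(0,2),(1,0)} =
      profile_count m row0 row0"
    by (subst profile_count_def, subst num_tilings_profile_region[where cx=0 and cy=2])
      (simp_all add: profile_expansion_simps)
  moreover have "profile_count m square01 square01 =
      profile_count m square01 {} + profile_count m {(0,0),(0,1)} {(0,0),(0,1)} + profile_count m row0 row0"
    by (subst profile_count_def, subst num_tilings_profile_region[where cx=1 and cy=1])
      (simp_all add: profile_expansion_simps)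
  moreover have "profile_count m row0 row0 = profile_count m {} {}"
    by (subst profile_count_def, subst num_tilings_profile_region[where cx=1 and cy=0])
      (simp_all add: profile_expansion_simps)
  moreover have "profile_count m {(0,0),(0,1)} {(0,0),(0,1)} = profile_count m {} {}"
    by (subst profile_count_def, subst num_tilings_profile_region[where cx=0 and cy=1])
      (simp_all add: profile_expansion_simps)
  ultimately show ?thesis by (simp add: box_count_eq_profile_count profile_count_Suc_top_empty)
qed

lemma profile_count_Suc_row0:
  "profile_count (Suc m) row0 {} = profile_count m square12 {}"
proof -
  have "profile_count m cross_section row0 = profile_count m square12 {}"
    by (subst profile_count_def, subst num_tilings_profile_region[where cx=1 and cy=0])
      (simp_all add: profile_expansion_simps)
  thus ?thesis by (simp add: profile_count_Suc_top_empty)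
qed

lemma profile_count_Suc_row2:
  "profile_count (Suc m) row2 {} = profile_count m square01 {}"
proof -
  have "profile_count m cross_section row2 = profile_count m square01 {}"
    by (subst profile_count_def, subst num_tilings_profile_region[where cx=1 and cy=2])
      (simp_all add: profile_expansion_simps)
  thus ?thesis by (simp add: profile_count_Suc_top_empty)
qed

lemma profile_count_Suc_square01:
  "profile_count (Suc m) square01 {} = box_count (Suc m) + 2 * profile_count m row2 {}"
proof -
  have "profile_count m cross_section square01 = profile_count m cross_section {}
      + profile_count m {(0,0),(0,1),(0,2),(1,2)} {(0,0),(0,1)}
      + profile_count m {(0,0),(0,2),(1,0),(1,2)} row0"
    by (subst profile_count_def, subst num_tilings_profile_region[where cx=1 and cy=1])
      (simp_all add: profile_expansion_simps)
  moreover have "profile_count m {(0,0),(0,1),(0,2),(1,2)} {(0,0),(0,1)} = profile_count m row2 {}"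
    by (subst profile_count_def, subst num_tilings_profile_region[where cx=0 and cy=1])
      (simp_all add: profile_expansion_simps)
  moreover have "profile_count m {(0,0),(0,2),(1,0),(1,2)} row0 = profile_count m row2 {}"
    by (subst profile_count_def, subst num_tilings_profile_region[where cx=1 and cy=0])
      (simp_all add: profile_expansion_simps)
  ultimately show ?thesis by (simp add: box_count_eq_profile_count profile_count_Suc_top_empty)
qed

lemma profile_count_Suc_square12:
  "profile_count (Suc m) square12 {} = box_count (Suc m) + 2 * profile_count m row0 {}"
proof -
  have "profile_count m cross_section square12 = profile_count m cross_section {}
      + profile_count m {(0,0),(0,1),(0,2),(1,0)} {(0,1),(0,2)}
      + profile_count m square01 {(0,1),(1,1)}"
    by (subst profile_count_def, subst num_tilings_profile_region[where cx=1 and cy=2])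
      (simp_all add: profile_expansion_simps)
  moreover have "profile_count m {(0,0),(0,1),(0,2),(1,0)} {(0,1),(0,2)} = profile_count m row0 {}"
    by (subst profile_count_def, subst num_tilings_profile_region[where cx=0 and cy=2])
      (simp_all add: profile_expansion_simps)
  moreover have "profile_count m square01 {(0,1),(1,1)} = profile_count m row0 {}"
    by (subst profile_count_def, subst num_tilings_profile_region[where cx=1 and cy=1])
      (simp_all add: profile_expansion_simps)
  ultimately show ?thesis by (simp add: box_count_eq_profile_count profile_count_Suc_top_empty)
qed

lemma box_count_0: "box_count 0 = 1"
  by (simp add: box_count_def cbox3_def num_tilings_empty[of 1 2 2, simplified])

lemma box_count_odd: "box_count (Suc (2 * k)) = 0"
proof -
  have "card (cbox3 (0,0,0) (2, 3, Suc (2 * k))) = 6 * Suc (2 * k)" by (simp add: card_cbox3)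
  moreover have "\<not> 4 dvd 6 * Suc (2 * k)" by presburger
  ultimately show ?thesis
    unfolding box_count_def using num_tilings_eq_0_if_not_dvd_card[of 1 2 2] by simp
qed

lemma profile_count_0_square:
  "profile_count 0 square01 {} = 1" "profile_count 0 square12 {} = 1"
proof -
  have "profile_region 0 square01 {} = cbox3 (0,0,0) (2,2,1)"
    "profile_region 0 square12 {} = cbox3 (0,1,0) (2,2,1)"
    by (auto simp: profile_region_def square01_def square12_def cbox3_def)
  moreover have "is_brick (1,2,2) (cbox3 p (2,2,1))" for p
    unfolding is_brick_1_2_2 by blast
  ultimately show "profile_count 0 square01 {} = 1" "profile_count 0 square12 {} = 1"
    unfolding profile_count_def by (simp_all add: num_tilings_brick)
qed

lemma profile_count_0_row:
  "profile_count 0 row0 {} = 0" "profile_count 0 row2 {} = 0"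
proof -
  have "profile_region 0 row0 {} = {(0,0,0),(1,0,0)}" "profile_region 0 row2 {} = {(0,2,0),(1,2,0)}"
    by (auto simp: profile_region_def row0_def row2_def)
  hence "card (profile_region 0 row0 {}) = 2" "card (profile_region 0 row2 {}) = 2" by simp_all
  thus "profile_count 0 row0 {} = 0" "profile_count 0 row2 {} = 0"
    unfolding profile_count_def using num_tilings_eq_0_if_not_dvd_card[of 1 2 2] by simp_all
qed

lemma profile_counts_even_length:
  "5 * box_count (2*k) = 4 * 6^k + 1 \<and>
   5 * profile_count (2*k) square01 {} + 1 = 6^(k+1) \<and>
   5 * profile_count (2*k) square12 {} + 1 = 6^(k+1) \<and>
   profile_count (2*k) row0 {} = 0 \<and> profile_count (2*k) row2 {} = 0"
proof (induction k)
  case 0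
  show ?case using box_count_0 profile_count_0_square profile_count_0_row by simp
next
  case (Suc k)
  then have IH: "5 * box_count (2*k) = 4 * 6^k + 1"
    "5 * profile_count (2*k) square01 {} + 1 = 6 * 6^k"
    "5 * profile_count (2*k) square12 {} + 1 = 6 * 6^k"
    "profile_count (2*k) row0 {} = 0" "profile_count (2*k) row2 {} = 0"
    by auto
  have odd: "profile_count (Suc (2*k)) square01 {} = 0" "profile_count (Suc (2*k)) square12 {} = 0"
    using profile_count_Suc_square01 profile_count_Suc_square12 box_count_odd IH(4,5) by simp_all
  have eq: "2 * Suc k = Suc (Suc (2*k))" by simp
  have "box_count (2 * Suc k) = profile_count (2*k) square12 {} + 3 * box_count (2*k)
      + profile_count (2*k) square01 {}"
    unfolding eq box_count_Suc_Suc profile_count_Suc_row0 ..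
  moreover have "profile_count (2 * Suc k) square01 {} = box_count (2 * Suc k) + 2 * profile_count (2*k) square01 {}"
    "profile_count (2 * Suc k) square12 {} = box_count (2 * Suc k) + 2 * profile_count (2*k) square12 {}"
    "profile_count (2 * Suc k) row0 {} = 0" "profile_count (2 * Suc k) row2 {} = 0"
    unfolding eq profile_count_Suc_square01[of "Suc (2*k)"] profile_count_Suc_square12[of "Suc (2*k)"]
      profile_count_Suc_row0 profile_count_Suc_row2 profile_count_Suc_row0[of "2*k"]
      profile_count_Suc_row2[of "2*k"] odd by simp_all
  ultimately show ?case using IH by simp
qed

lemma T_eq_box_count: "T (3 * k) = box_count (2 * k)"
proof -
  have "card P = 3 * k" if "P \<in> brick_tilings (1,2,2) (cbox3 (0,0,0) (2,3,2*k))" for P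
    using card_tiled_region[OF that] by (simp add: card_cbox3)
  hence "{P. is_tiling 2 3 (2 * (3 * k) div 3) (1,2,2) P \<and> card P = 3 * k} =
      brick_tilings (1,2,2) (cbox3 (0,0,0) (2,3,2*k))"
    by (auto simp: is_tiling_iff_brick_tilings)
  thus ?thesis by (simp add: T_def box_count_def num_tilings_def)
qed

lemma of_nat_T:
  "(of_nat (T N) :: rat) = (if 3 dvd N then (4 * 6 ^ (N div 3) + 1) / 5 else 0)"
proof (cases "3 dvd N")
  case True
  then obtain k where N: "N = 3 * k" by blast
  have "5 * box_count (2 * k) = 4 * 6 ^ k + 1" using profile_counts_even_length by blast
  hence "(of_nat (5 * box_count (2 * k)) :: rat) = of_nat (4 * 6 ^ k + 1)" by (rule arg_cong)
  moreover have "T N = box_count (2 * k)" "N div 3 = k" using N T_eq_box_count by simp_all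
  ultimately show ?thesis using True by (simp add: field_simps)
qed (simp add: T_def)

lemma closed_form_recurrence:
  fixes f :: "nat \<Rightarrow> rat"
  assumes f: "\<And>N. f N = (if 3 dvd N then (4 * 6 ^ (N div 3) + 1) / 5 else 0)"
  shows "f n - (if n < 3 then 0 else 7 * f (n - 3)) + (if n < 6 then 0 else 6 * f (n - 6))
       = (if n = 0 then 1 else if n = 3 then -2 else 0)"
proof (cases "3 dvd n")
  case True
  then obtain k where n: "n = 3 * k" by blast
  consider "k = 0" | "k = 1" | j where "k = j + 2" by (metis add_2_eq_Suc' not0_implies_Suc One_nat_def)
  thus ?thesis
  proof cases
    case 3
    hence "n - 3 = 3 * (j + 1)" "n - 6 = 3 * j" "n = 3 * (j + 2)" using n by simp_all
    thus ?thesis unfolding f by (simp add: field_simps)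
  qed (use n f in simp_all)
next
  case False
  hence "\<not> 3 dvd (n - 3)" if "n \<ge> 3" using that by presburger
  moreover have "\<not> 3 dvd (n - 6)" if "n \<ge> 6" using False that by presburger
  moreover have "n \<noteq> 0" using False by (metis dvd_0_right)
  moreover have "n \<noteq> 3" using False by auto
  ultimately show ?thesis using False f by (auto simp: not_less)
qed

lemma fps_closed_form:
  "Abs_fps (\<lambda>N. if 3 dvd N then (4 * 6 ^ (N div 3) + 1) / 5 else 0 :: rat) =
    (1 - 2 * fps_X ^ 3) / ((1 - fps_X ^ 3) * (1 - 6 * fps_X ^ 3))"
proof -
  define F where "F = Abs_fps (\<lambda>N. if 3 dvd N then (4 * 6 ^ (N div 3) + 1) / 5 else 0 :: rat)"
  define D :: "rat fps" where "D = (1 - fps_X ^ 3) * (1 - 6 * fps_X ^ 3)"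
  have D: "F * D = F - 7 * (F * fps_X ^ 3) + 6 * ((F * fps_X ^ 3) * fps_X ^ 3)"
    unfolding D_def by (simp add: algebra_simps flip: power_add)
  have "F * D = 1 - 2 * fps_X ^ 3"
  proof (rule fps_ext)
    fix n
    have "fps_nth (F * D) n = fps_nth F n - (if n < 3 then 0 else 7 * fps_nth F (n - 3))
        + (if n < 6 then 0 else 6 * fps_nth F (n - 6))"
      unfolding D by (simp add: fps_X_power_mult_right_nth diff_diff_add numeral_fps_const; arith)
    also have "\<dots> = (if n = 0 then 1 else if n = 3 then -2 else 0)"
      by (rule closed_form_recurrence) (simp add: F_def)
    finally show "fps_nth (F * D) n = fps_nth (1 - 2 * fps_X ^ 3) n"
      by (simp add: numeral_fps_const)
  qed
  moreover have "fps_nth D 0 = 1" by (simp add: D_def)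
  ultimately have "(1 - 2 * fps_X ^ 3) / D = F * (D * inverse D)"
    by (simp add: fps_divide_unit mult.assoc)
  also have "\<dots> = F" using \<open>fps_nth D 0 = 1\<close> by (simp add: inverse_mult_eq_1')
  finally have "(1 - 2 * fps_X ^ 3) / D = F" .
  thus ?thesis unfolding F_def D_def by (rule sym)
qed

theorem mainTheorem15:
  shows "Abs_fps (\<lambda>N. of_nat (T N) :: rat) =
    (1 - 2 * fps_X ^ 3) / ((1 - fps_X ^ 3) * (1 - 6 * fps_X ^ 3))"
  unfolding of_nat_T by (rule fps_closed_form)

end
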